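(* Let $D$ be a unique factorization domain and let $a$ be a nonzero element of $D$. Then the congruence $P_{J([a]_\sim)}$ on the semigroup $D'=D_{mult}/\sim$ has finite index, and $d(a)=|D'/P_{J([a]_\sim)}|$.
   Context: $D_{mult}$ is the multiplicative semigroup of $D$; $\sim$ is the associate relation, a congruence on $D_{mult}$; $D'=D_{mult}/\sim$ and $[x]_\sim$ denotes the $\sim$-class of $x$. $J([a]_\sim)$ is the ideal of the semigroup $D'$ generated by $[a]_\sim$. For a semigroup $S$, $H\subseteq S$, $a\in S$: $H\dots a=\{(x,y)\in S\times S: xay\in H\}$ and $P_H=\{(a,b)\in S\times S: H\dots a=H\dots b\}$ (computed here in $S=D'$). $d(a)$ is the number of pairwise non-associated divisors of $a$ in $D$ (equivalently, the number of distinct divisors of $[a]_\sim$ in $D'$). *)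

theory Defs
  imports "HOL-Computational_Algebra.Factorial_Ring"
begin

definition assoc_class :: "'a::comm_monoid_mult \<Rightarrow> 'a set" where
  "assoc_class x = {y. x dvd y \<and> y dvd x}"

definition Dprime :: "'a::comm_monoid_mult set set" where
  "Dprime = range assoc_class"

definition Dprime_mult :: "'a::comm_monoid_mult set \<Rightarrow> 'a set \<Rightarrow> 'a set" where
  "Dprime_mult A B = assoc_class ((SOME x. x \<in> A) * (SOME y. y \<in> B))"

(* ideal of a semigroup (S, f) generated by c:  S^1 c S^1 *)
definition sg_ideal_gen :: "'s set \<Rightarrow> ('s \<Rightarrow> 's \<Rightarrow> 's) \<Rightarrow> 's \<Rightarrow> 's set" where
  "sg_ideal_gen S f c = {c} \<union> {f x c | x. x \<in> S} \<union> {f c y | y. y \<in> S}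
                         \<union> {f (f x c) y | x y. x \<in> S \<and> y \<in> S}"

definition sg_res :: "'s set \<Rightarrow> ('s \<Rightarrow> 's \<Rightarrow> 's) \<Rightarrow> 's set \<Rightarrow> 's \<Rightarrow> ('s \<times> 's) set" where
  "sg_res S f H a = {(x, y). x \<in> S \<and> y \<in> S \<and> f (f x a) y \<in> H}"

definition sg_P :: "'s set \<Rightarrow> ('s \<Rightarrow> 's \<Rightarrow> 's) \<Rightarrow> 's set \<Rightarrow> ('s \<times> 's) set" where
  "sg_P S f H = {(a, b). a \<in> S \<and> b \<in> S \<and> sg_res S f H a = sg_res S f H b}"

definition num_divs :: "'a::comm_monoid_mult \<Rightarrow> nat" where
  "num_divs a = card (assoc_class ` {d. d dvd a})"

end

theory Submission imports Defs begin

text \<open>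
  For \<open>a \<noteq> 0\<close>, two classes \<open>[b]\<close>, \<open>[c]\<close> are \<open>P\<close>-equivalent iff \<open>a dvd x * b \<longleftrightarrow> a dvd x * c\<close>
  for all \<open>x\<close>. In a factorial ring the condition \<open>a dvd x * b\<close> says exactly that \<open>x\<close> contains
  the prime factors of \<open>a\<close> not already supplied by \<open>b\<close>, i.e. the multiset
  \<open>prime_factorization a - prime_factorization b\<close>. So the \<open>P\<close>-classes correspond to the
  values of this multiset, which are precisely the sub-multisets of \<open>prime_factorization a\<close>,
  and these in turn correspond to the divisors of \<open>a\<close> up to association.
\<close>

lemma finite_submultisets: "finite {N. N \<subseteq># M}"
proof (rule finite_subset)
  show "{N. N \<subseteq># M} \<subseteq> (\<Union>n\<le>size M. multisets_of_size (set_mset M) n)"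
    by (auto simp: multisets_of_size_def dest: mset_subset_eqD size_mset_mono)
qed auto

lemma bij_betw_fibres_quotient_kernel:
  "bij_betw (\<lambda>v. {x \<in> D. f x = v}) (f ` D) (D // {(x, y). x \<in> D \<and> y \<in> D \<and> f x = f y})"
proof (rule bij_betw_imageI)
  show "inj_on (\<lambda>v. {x \<in> D. f x = v}) (f ` D)"
    unfolding inj_on_def by blast
  have "\<And>x. x \<in> D \<Longrightarrow> {y \<in> D. f x = f y} = {y \<in> D. f y = f x}" by auto
  then show "(\<lambda>v. {x \<in> D. f x = v}) ` f ` D = D // {(x, y). x \<in> D \<and> y \<in> D \<and> f x = f y}"
    unfolding quotient_def by (auto simp: image_iff)
qed

lemma card_image_eq_if_same_kernel:
  assumes "\<And>x y. x \<in> D \<Longrightarrow> y \<in> D \<Longrightarrow> f x = f y \<longleftrightarrow> g x = g y"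
  shows "card (f ` D) = card (g ` D)"
proof -
  define h where "h = (\<lambda>v. g (inv_into D f v))"
  have "g ` D = h ` f ` D"
    unfolding h_def image_image
    by (rule image_cong[OF refl]) (metis assms f_inv_into_f image_eqI inv_into_into)
  moreover have "inj_on h (f ` D)"
    unfolding h_def inj_on_def by (metis assms f_inv_into_f inv_into_into)
  ultimately show ?thesis by (simp add: card_image)
qed

lemma mem_assoc_class_iff: "y \<in> assoc_class x \<longleftrightarrow> x dvd y \<and> y dvd x"
  unfolding assoc_class_def by simp

lemma assoc_class_eq_iff: "assoc_class x = assoc_class y \<longleftrightarrow> x dvd y \<and> y dvd x"
proof
  assume "assoc_class x = assoc_class y"
  moreover have "y \<in> assoc_class y" by (simp add: mem_assoc_class_iff)
  ultimately show "x dvd y \<and> y dvd x" by (metis mem_assoc_class_iff)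
next
  assume "x dvd y \<and> y dvd x"
  then show "assoc_class x = assoc_class y"
    unfolding assoc_class_def by (blast intro: dvd_trans)
qed

lemma some_in_assoc_class: "(SOME y. y \<in> assoc_class x) \<in> assoc_class x"
  by (rule someI[of _ x]) (simp add: mem_assoc_class_iff)

lemma assoc_class_in_Dprime [simp]: "assoc_class x \<in> Dprime"
  unfolding Dprime_def by auto

lemma DprimeE:
  assumes "A \<in> Dprime"
  obtains x where "A = assoc_class x"
  using assms unfolding Dprime_def by auto

lemma Dprime_mult_assoc_class [simp]:
  "Dprime_mult (assoc_class x) (assoc_class y) = assoc_class (x * y)"
proof -
  let ?x = "SOME u. u \<in> assoc_class x" and ?y = "SOME u. u \<in> assoc_class y"
  have "x dvd ?x \<and> ?x dvd x" "y dvd ?y \<and> ?y dvd y"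
    using some_in_assoc_class[of x] some_in_assoc_class[of y] by (simp_all only: mem_assoc_class_iff)
  then have "x * y dvd ?x * ?y \<and> ?x * ?y dvd x * y"
    using mult_dvd_mono by blast
  then show ?thesis
    unfolding Dprime_mult_def assoc_class_eq_iff by (rule conjE) simp
qed

lemma sg_ideal_gen_assoc_class:
  "sg_ideal_gen Dprime Dprime_mult (assoc_class a) = {assoc_class z | z. a dvd z}"
    (is "_ = ?M")
proof
  have left: "Dprime_mult A B \<in> ?M" and right: "Dprime_mult B A \<in> ?M"
    if A: "A \<in> Dprime" and B: "B \<in> ?M" for A B
  proof -
    obtain x where x: "A = assoc_class x" using A by (rule DprimeE)
    obtain z where z: "B = assoc_class z" "a dvd z" using B by blast
    have "a dvd x * z" "a dvd z * x" using z(2) by simp_all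
    then show "Dprime_mult A B \<in> ?M" "Dprime_mult B A \<in> ?M"
      unfolding x z(1) Dprime_mult_assoc_class by blast+
  qed
  have generator: "assoc_class a \<in> ?M" using dvd_refl by blast
  show "sg_ideal_gen Dprime Dprime_mult (assoc_class a) \<subseteq> ?M"
  proof
    fix A assume "A \<in> sg_ideal_gen Dprime Dprime_mult (assoc_class a)"
    then consider "A = assoc_class a"
      | x where "x \<in> Dprime" "A = Dprime_mult x (assoc_class a)"
      | y where "y \<in> Dprime" "A = Dprime_mult (assoc_class a) y"
      | x y where "x \<in> Dprime" "y \<in> Dprime" "A = Dprime_mult (Dprime_mult x (assoc_class a)) y"
      unfolding sg_ideal_gen_def by blast
    then show "A \<in> ?M"
    proof cases
      case 1
      then show ?thesis using generator by simp
    next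
      case (2 x)
      then show ?thesis using left[OF _ generator] by simp
    next
      case (3 y)
      then show ?thesis using right[OF _ generator] by simp
    next
      case (4 x y)
      then show ?thesis using right[OF _ left[OF _ generator]] by simp
    qed
  qed
  show "?M \<subseteq> sg_ideal_gen Dprime Dprime_mult (assoc_class a)"
  proof
    fix A assume "A \<in> ?M"
    then obtain k where "A = assoc_class (a * k)" by (auto elim!: dvdE)
    then have "A \<in> {Dprime_mult (assoc_class a) y | y. y \<in> Dprime}"
      by (metis (mono_tags) Dprime_mult_assoc_class assoc_class_in_Dprime mem_Collect_eq)
    then show "A \<in> sg_ideal_gen Dprime Dprime_mult (assoc_class a)"
      unfolding sg_ideal_gen_def by (intro UnI1 UnI2)
  qed
qed

lemma assoc_class_in_sg_ideal_gen_iff: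
  "assoc_class z \<in> sg_ideal_gen Dprime Dprime_mult (assoc_class a) \<longleftrightarrow> a dvd z"
proof -
  have "(\<exists>w. assoc_class z = assoc_class w \<and> a dvd w) \<longleftrightarrow> a dvd z"
    unfolding assoc_class_eq_iff by (meson dvd_refl dvd_trans)
  then show ?thesis
    unfolding sg_ideal_gen_assoc_class by simp
qed

lemma sg_res_assoc_class_iff:
  "(assoc_class u, assoc_class v) \<in> sg_res Dprime Dprime_mult (sg_ideal_gen Dprime Dprime_mult (assoc_class a)) (assoc_class b)
     \<longleftrightarrow> a dvd u * b * v"
  unfolding sg_res_def by (simp add: assoc_class_in_sg_ideal_gen_iff)

lemma assoc_class_in_sg_P_iff:
  "(assoc_class b, assoc_class c) \<in> sg_P Dprime Dprime_mult (sg_ideal_gen Dprime Dprime_mult (assoc_class a))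
     \<longleftrightarrow> (\<forall>x. a dvd x * b \<longleftrightarrow> a dvd x * c)"
proof -
  let ?R = "sg_res Dprime Dprime_mult (sg_ideal_gen Dprime Dprime_mult (assoc_class a))"
  have "?R (assoc_class b) = ?R (assoc_class c) \<longleftrightarrow> (\<forall>u v. a dvd u * b * v \<longleftrightarrow> a dvd u * c * v)"
  proof
    assume "?R (assoc_class b) = ?R (assoc_class c)"
    then show "\<forall>u v. a dvd u * b * v \<longleftrightarrow> a dvd u * c * v"
      by (metis sg_res_assoc_class_iff)
  next
    assume "\<forall>u v. a dvd u * b * v \<longleftrightarrow> a dvd u * c * v"
    then have "p \<in> ?R (assoc_class b) \<longleftrightarrow> p \<in> ?R (assoc_class c)" if "p \<in> Dprime \<times> Dprime" for p
      using that by (auto elim!: DprimeE simp: sg_res_assoc_class_iff)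
    moreover have "?R A \<subseteq> Dprime \<times> Dprime" for A
      unfolding sg_res_def by auto
    ultimately show "?R (assoc_class b) = ?R (assoc_class c)"
      by blast
  qed
  also have "\<dots> \<longleftrightarrow> (\<forall>x. a dvd x * b \<longleftrightarrow> a dvd x * c)"
  proof
    assume "\<forall>u v. a dvd u * b * v \<longleftrightarrow> a dvd u * c * v"
    then show "\<forall>x. a dvd x * b \<longleftrightarrow> a dvd x * c"
      by (metis mult_1_right)
  next
    assume H: "\<forall>x. a dvd x * b \<longleftrightarrow> a dvd x * c"
    show "\<forall>u v. a dvd u * b * v \<longleftrightarrow> a dvd u * c * v"
    proof (intro allI)
      fix u v
      have "u * b * v = (u * v) * b" "u * c * v = (u * v) * c"
        by (simp_all add: ac_simps)
      then show "a dvd u * b * v \<longleftrightarrow> a dvd u * c * v"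
        using H by simp
    qed
  qed
  finally show ?thesis
    unfolding sg_P_def by simp
qed

text \<open>The value at \<open>b = 0\<close> is forced by \<open>a dvd x * 0\<close> holding for every \<open>x\<close>.\<close>

definition missing_factors :: "'a::factorial_semiring \<Rightarrow> 'a \<Rightarrow> 'a multiset" where
  "missing_factors a b = (if b = 0 then {#} else prime_factorization a - prime_factorization b)"

lemma missing_factors_subset: "missing_factors a b \<subseteq># prime_factorization a"
  by (simp add: missing_factors_def)

lemma missing_factors_cong:
  fixes a b c :: "'a::factorial_semiring"
  assumes "b dvd c" "c dvd b"
  shows "missing_factors a b = missing_factors a c"
proof (cases "b = 0")
  case False
  with assms have "c \<noteq> 0" by auto
  with False assms have "prime_factorization b = prime_factorization c"
    by (simp add: subset_mset.eq_iff prime_factorization_subset_iff_dvd)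
  then show ?thesis
    using False \<open>c \<noteq> 0\<close> by (simp add: missing_factors_def)
qed (use assms in simp)

lemma dvd_mult_iff_missing_factors_subset:
  fixes a b x :: "'a::factorial_semiring"
  assumes "a \<noteq> 0"
  shows "a dvd x * b \<longleftrightarrow> x = 0 \<or> missing_factors a b \<subseteq># prime_factorization x"
proof (cases "x = 0 \<or> b = 0")
  case True
  then show ?thesis by (auto simp: missing_factors_def)
next
  case False
  then have "a dvd x * b \<longleftrightarrow> prime_factorization a \<subseteq># prime_factorization x + prime_factorization b"
    using assms by (simp add: prime_factorization_subset_iff_dvd [symmetric] prime_factorization_mult)
  also have "\<dots> \<longleftrightarrow> missing_factors a b \<subseteq># prime_factorization x"
    using False by (simp add: missing_factors_def subset_eq_diff_conv)
  finally show ?thesis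
    using False by simp
qed

lemma prime_factorization_prod_mset_submultiset:
  fixes a :: "'a::factorial_semiring"
  assumes "N \<subseteq># prime_factorization a"
  shows "prod_mset N \<noteq> 0" "prime_factorization (prod_mset N) = N"
proof -
  have prime: "\<And>p. p \<in># N \<Longrightarrow> prime p"
    using assms by (meson in_prime_factors_imp_prime mset_subset_eqD)
  then show "prod_mset N \<noteq> 0"
    by (metis not_prime_0 prod_mset_zero_iff)
  show "prime_factorization (prod_mset N) = N"
    using prime by (rule prime_factorization_prod_mset_primes)
qed

text \<open>
  Choosing \<open>x\<close> to be the product of the missing factors of \<open>b\<close> shows that those of \<open>c\<close>
  are among them.
\<close>

lemma dvd_mult_cong_iff_missing_factors_eq:
  fixes a b c :: "'a::factorial_semiring"
  assumes "a \<noteq> 0"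
  shows "(\<forall>x. a dvd x * b \<longleftrightarrow> a dvd x * c) \<longleftrightarrow> missing_factors a b = missing_factors a c"
proof
  assume H: "\<forall>x. a dvd x * b \<longleftrightarrow> a dvd x * c"
  have "missing_factors a c \<subseteq># missing_factors a b" if "\<forall>x. a dvd x * b \<longrightarrow> a dvd x * c" for b c
  proof -
    let ?x = "prod_mset (missing_factors a b)"
    note x = prime_factorization_prod_mset_submultiset[OF missing_factors_subset[of a b]]
    have "a dvd ?x * b"
      using x dvd_mult_iff_missing_factors_subset[OF assms] by simp
    then have "a dvd ?x * c"
      using that by blast
    then show ?thesis
      using x dvd_mult_iff_missing_factors_subset[OF assms] by simp
  qed
  then show "missing_factors a b = missing_factors a c"
    using H by (metis subset_mset.antisym)
next
  assume "missing_factors a b = missing_factors a c"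
  then show "\<forall>x. a dvd x * b \<longleftrightarrow> a dvd x * c"
    using dvd_mult_iff_missing_factors_subset[OF assms] by metis
qed

lemma range_missing_factors:
  fixes a :: "'a::factorial_semiring"
  shows "range (missing_factors a) = {N. N \<subseteq># prime_factorization a}"
proof
  show "range (missing_factors a) \<subseteq> {N. N \<subseteq># prime_factorization a}"
    using missing_factors_subset by blast
  show "{N. N \<subseteq># prime_factorization a} \<subseteq> range (missing_factors a)"
  proof
    fix N assume "N \<in> {N. N \<subseteq># prime_factorization a}"
    then have N: "N \<subseteq># prime_factorization a" by simp
    let ?b = "prod_mset (prime_factorization a - N)"
    have "prime_factorization a - N \<subseteq># prime_factorization a" by simp
    from prime_factorization_prod_mset_submultiset[OF this]
    have "missing_factors a ?b = N"
      using N by (simp add: missing_factors_def subset_mset.diff_diff_right)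
    then show "N \<in> range (missing_factors a)" by (metis rangeI)
  qed
qed

lemma num_divs_eq_card_submultisets:
  fixes a :: "'a::factorial_semiring"
  assumes "a \<noteq> 0"
  shows "num_divs a = card {N. N \<subseteq># prime_factorization a}"
proof -
  have "card (assoc_class ` {d. d dvd a}) = card (prime_factorization ` {d. d dvd a})"
  proof (rule card_image_eq_if_same_kernel)
    fix x y assume "x \<in> {d. d dvd a}" "y \<in> {d. d dvd a}"
    then have "x \<noteq> 0" "y \<noteq> 0" using assms by auto
    then show "assoc_class x = assoc_class y \<longleftrightarrow> prime_factorization x = prime_factorization y"
      by (metis assoc_class_eq_iff prime_factorization_subset_iff_dvd subset_mset.antisym subset_mset.order_refl)
  qed
  moreover have "prime_factorization ` {d. d dvd a} = {N. N \<subseteq># prime_factorization a}"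
  proof
    show "prime_factorization ` {d. d dvd a} \<subseteq> {N. N \<subseteq># prime_factorization a}"
      using assms by (auto simp: prime_factorization_subset_iff_dvd)
    show "{N. N \<subseteq># prime_factorization a} \<subseteq> prime_factorization ` {d. d dvd a}"
    proof
      fix N assume "N \<in> {N. N \<subseteq># prime_factorization a}"
      then have N: "N \<subseteq># prime_factorization a" by simp
      note prod = prime_factorization_prod_mset_submultiset[OF N]
      then have "prod_mset N dvd a"
        using assms N by (metis prime_factorization_subset_iff_dvd)
      then show "N \<in> prime_factorization ` {d. d dvd a}"
        using prod by force
    qed
  qed
  ultimately show ?thesis
    unfolding num_divs_def by simp
qed

definition class_missing_factors :: "'a::factorial_semiring \<Rightarrow> 'a set \<Rightarrow> 'a multiset" where
  "class_missing_factors a A = missing_factors a (SOME x. x \<in> A)"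

lemma class_missing_factors_assoc_class [simp]:
  "class_missing_factors a (assoc_class b) = missing_factors a b"
  unfolding class_missing_factors_def
  using some_in_assoc_class[of b] by (intro missing_factors_cong) (simp_all add: mem_assoc_class_iff)

lemma sg_P_sg_ideal_gen_eq_kernel:
  fixes a :: "'a::factorial_semiring"
  assumes "a \<noteq> 0"
  shows "sg_P Dprime Dprime_mult (sg_ideal_gen Dprime Dprime_mult (assoc_class a)) =
    {(A, B). A \<in> Dprime \<and> B \<in> Dprime \<and> class_missing_factors a A = class_missing_factors a B}"
proof -
  have "(A, B) \<in> sg_P Dprime Dprime_mult (sg_ideal_gen Dprime Dprime_mult (assoc_class a)) \<longleftrightarrow>
      class_missing_factors a A = class_missing_factors a B"
    if "A \<in> Dprime" "B \<in> Dprime" for A B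
    using that
    by (auto elim!: DprimeE simp: assoc_class_in_sg_P_iff dvd_mult_cong_iff_missing_factors_eq[OF assms])
  moreover have "sg_P Dprime Dprime_mult H \<subseteq> Dprime \<times> Dprime" for H :: "'a set set"
    unfolding sg_P_def by auto
  ultimately show ?thesis
    by blast
qed

lemma class_missing_factors_image:
  "class_missing_factors a ` Dprime = {N. N \<subseteq># prime_factorization a}"
  unfolding range_missing_factors[symmetric] Dprime_def image_image by simp

theorem theorem4:
  fixes a :: "'a :: {factorial_semiring, idom}"
  assumes "a \<noteq> 0"
  shows "finite (Dprime // sg_P Dprime Dprime_mult (sg_ideal_gen Dprime Dprime_mult (assoc_class a)))
         \<and> num_divs a = card (Dprime // sg_P Dprime Dprime_mult (sg_ideal_gen Dprime Dprime_mult (assoc_class a)))"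
proof -
  let ?Q = "Dprime // sg_P Dprime Dprime_mult (sg_ideal_gen Dprime Dprime_mult (assoc_class a))"
  have bij: "bij_betw (\<lambda>N. {A \<in> Dprime. class_missing_factors a A = N}) {N. N \<subseteq># prime_factorization a} ?Q"
    using bij_betw_fibres_quotient_kernel[where f = "class_missing_factors a" and D = Dprime]
    unfolding sg_P_sg_ideal_gen_eq_kernel[OF assms] class_missing_factors_image .
  show ?thesis
    using bij_betw_finite[OF bij] bij_betw_same_card[OF bij] finite_submultisets[of "prime_factorization a"]
      num_divs_eq_card_submultisets[OF assms] by simp
qed

end
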